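(* Let $f\in\mathbf{SB}_n$ with $\deg(f)>1$ and $\deg(f)$ not a power of $2$. Then $\mathcal{FAI}(f)\le \deg(f)-1$.
   Context: $\mathbf{SB}_n$ is the set of symmetric Boolean functions on $n$ variables; $\deg$ is the algebraic degree. The algebraic immunity of $f\in\mathbf{B}_n$ is $\mathcal{AI}(f)=\min\{\deg(g): g\neq0,\ gf=0 \text{ or } g(f+1)=0\}$. The fast algebraic immunity is $\mathcal{FAI}(f)=\min\big(\{2\mathcal{AI}(f)\}\cup\{\deg(g)+\deg(gf): g\in\mathbf{B}_n,\ 1\le\deg(g)<\mathcal{AI}(f)\}\big)$. *)

theory Defs
  imports Main
begin

text \<open>A Boolean function on n variables is modelled as f :: nat set => bool,
  where an input vector x in F_2^n is identified with its support
  {i. x_i = 1}, a subset of {..<n}.  Only the values on subsets of {..<n}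
  matter; all notions below are relativised to Pow {..<n}.\<close>

definition is_zero_on :: "nat \<Rightarrow> (nat set \<Rightarrow> bool) \<Rightarrow> bool" where
  "is_zero_on n g \<longleftrightarrow> (\<forall>S. S \<subseteq> {..<n} \<longrightarrow> \<not> g S)"

definition anf_coeff :: "(nat set \<Rightarrow> bool) \<Rightarrow> nat set \<Rightarrow> bool" where
  "anf_coeff f T \<longleftrightarrow> odd (card {S. S \<subseteq> T \<and> f S})"

text \<open>Algebraic degree: maximal size of a monomial with nonzero ANF coefficient
  (degree of the zero function taken to be 0).\<close>
definition alg_deg :: "nat \<Rightarrow> (nat set \<Rightarrow> bool) \<Rightarrow> nat" where
  "alg_deg n f = Max ({card T | T. T \<subseteq> {..<n} \<and> anf_coeff f T} \<union> {0})"

definition symmetric_bf :: "nat \<Rightarrow> (nat set \<Rightarrow> bool) \<Rightarrow> bool" where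
  "symmetric_bf n f \<longleftrightarrow>
     (\<forall>S T. S \<subseteq> {..<n} \<longrightarrow> T \<subseteq> {..<n} \<longrightarrow> card S = card T \<longrightarrow> f S = f T)"

definition bf_mult :: "(nat set \<Rightarrow> bool) \<Rightarrow> (nat set \<Rightarrow> bool) \<Rightarrow> (nat set \<Rightarrow> bool)" where
  "bf_mult g f = (\<lambda>S. g S \<and> f S)"

definition bf_compl :: "(nat set \<Rightarrow> bool) \<Rightarrow> (nat set \<Rightarrow> bool)" where
  "bf_compl f = (\<lambda>S. \<not> f S)"

definition alg_immunity :: "nat \<Rightarrow> (nat set \<Rightarrow> bool) \<Rightarrow> nat" where
  "alg_immunity n f = (LEAST d. \<exists>g. \<not> is_zero_on n g \<and>
       (is_zero_on n (bf_mult g f) \<or> is_zero_on n (bf_mult g (bf_compl f))) \<and>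
       alg_deg n g = d)"

definition fast_alg_immunity :: "nat \<Rightarrow> (nat set \<Rightarrow> bool) \<Rightarrow> nat" where
  "fast_alg_immunity n f = (LEAST d. d = 2 * alg_immunity n f \<or>
       (\<exists>g. 1 \<le> alg_deg n g \<and> alg_deg n g < alg_immunity n f \<and>
            d = alg_deg n g + alg_deg n (bf_mult g f)))"

end

theory Submission
  imports Defs "HOL-Library.Z2"
begin

(*
  A symmetric
  Boolean function is determined by its value vector v(0..n) over GF(2), and its
  ANF is symmetric as well, with weight coefficients lambda = B v, where
  (B c)(s) = sum_j (s choose j) c(j) is the binomial transform over GF(2), an
  involution.  Write d = deg f = 2^K + r with 0 < r < 2^K (possible exactly when
  d > 1 is not a power of 2).  By Lucas' theorem B c is 2^K-periodic whenever
  c is supported below 2^K, and conversely a 2^K-periodic vector has no ANF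
  coefficients from weight 2^K on.  The symmetric multiplier
     g = 1 + sum_t lambda(2^K + t) sigma_t       (deg g = r)
  makes g*f 2^K-periodic, so deg(g*f) < 2^K and deg g + deg(g*f) <= d - 1.
*)

text \<open>Keep bit arithmetic in ring form rather than as boolean xor/and.\<close>
declare add_bit_eq_xor[simp del] mult_bit_eq_and[simp del]

lemma bit_add_self [simp]: "(x::bit) + x = 0"
  by (cases x) simp_all

lemma of_nat_bit: "(of_nat m :: bit) = (if even m then 0 else 1)"
  by (induction m) auto

section \<open>The binomial transform over GF(2)\<close>

text \<open>Binomial (Moebius) transform of a weight sequence: it maps the value
  vector of a symmetric function to its ANF weight coefficients and back.\<close>
definition bin_tr :: "(nat \<Rightarrow> bit) \<Rightarrow> nat \<Rightarrow> bit" where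
  "bin_tr c s = (\<Sum>j\<le>s. of_nat (s choose j) * c j)"

lemma bin_tr_extend:
  assumes "s \<le> N"
  shows "bin_tr c s = (\<Sum>j\<le>N. of_nat (s choose j) * c j)"
  unfolding bin_tr_def
  by (rule sum.mono_neutral_left) (use assms in \<open>auto simp: binomial_eq_0\<close>)

lemma bin_tr_cong:
  assumes "\<And>j. j \<le> s \<Longrightarrow> c j = c' j"
  shows "bin_tr c s = bin_tr c' s"
  unfolding bin_tr_def using assms by simp

lemma bin_tr_zero [simp]: "bin_tr (\<lambda>_. 0) s = 0"
  by (simp add: bin_tr_def)

lemma bin_tr_add: "bin_tr (\<lambda>t. a t + b t) s = bin_tr a s + bin_tr b s"
  unfolding bin_tr_def by (simp add: sum.distrib algebra_simps)

lemma bin_tr_unit: "bin_tr (\<lambda>t. if t = 0 then 1 else 0) s = 1"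
  unfolding bin_tr_def by (simp add: if_distrib[of "\<lambda>x. a * x" for a] cong: if_cong)

text \<open>Pascal's rule, in transformed form.\<close>
lemma bin_tr_Suc: "bin_tr c (Suc s) = bin_tr c s + bin_tr (\<lambda>t. c (Suc t)) s"
proof -
  have "bin_tr c (Suc s) = c 0 + (\<Sum>j\<le>s. of_nat (Suc s choose Suc j) * c (Suc j))"
    unfolding bin_tr_def by (subst sum.atMost_Suc_shift) simp
  also have "\<dots> = (c 0 + (\<Sum>j\<le>s. of_nat (s choose Suc j) * c (Suc j)))
                  + (\<Sum>j\<le>s. of_nat (s choose j) * c (Suc j))"
    by (simp add: sum.distrib algebra_simps)
  also have "c 0 + (\<Sum>j\<le>s. of_nat (s choose Suc j) * c (Suc j)) = bin_tr c s"
  proof -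
    have "bin_tr c s = (\<Sum>j\<le>Suc s. of_nat (s choose j) * c j)"
      by (rule bin_tr_extend) simp
    also have "\<dots> = c 0 + (\<Sum>j\<le>s. of_nat (s choose Suc j) * c (Suc j))"
      by (subst sum.atMost_Suc_shift) simp
    finally show ?thesis by simp
  qed
  finally show ?thesis by (simp add: bin_tr_def)
qed

lemma bin_tr_involution: "bin_tr (bin_tr c) s = c s"
proof (induction s arbitrary: c)
  case 0
  then show ?case by (simp add: bin_tr_def)
next
  case (Suc s)
  have "(\<lambda>t. bin_tr c (Suc t)) = (\<lambda>t. bin_tr c t + bin_tr (\<lambda>t. c (Suc t)) t)"
    by (simp add: bin_tr_Suc)
  then have "bin_tr (bin_tr c) (Suc s)
      = bin_tr (bin_tr c) s + (bin_tr (bin_tr c) s + bin_tr (bin_tr (\<lambda>t. c (Suc t))) s)"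
    by (simp add: bin_tr_Suc bin_tr_add)
  also have "\<dots> = c (Suc s)"
    using Suc.IH[of c] Suc.IH[of "\<lambda>t. c (Suc t)"] by (simp add: add.assoc[symmetric])
  finally show ?case .
qed

lemma even_binomial_2pow:
  assumes "0 < j" "j < 2 ^ K"
  shows "even (2 ^ K choose j)"
proof (rule ccontr)
  assume odd: "odd (2 ^ K choose j)"
  obtain i where j: "j = Suc i" using assms(1) by (cases j) auto
  have "j * (2 ^ K choose j) = 2 ^ K * ((2 ^ K - 1) choose i)"
    using binomial_absorption[of i "2 ^ K"] j by simp
  then have "(2::nat) ^ K dvd j * (2 ^ K choose j)" by simp
  moreover have "coprime ((2::nat) ^ K) (2 ^ K choose j)"
    using odd by (simp add: coprime_commute)
  ultimately have "(2::nat) ^ K dvd j"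
    using coprime_dvd_mult_left_iff by blast
  then show False using assms by (auto dest: dvd_imp_le)
qed

text \<open>A case of Lucas' theorem: modulo 2,
  (s + 2^K choose t) = (s choose t) + (s choose t - 2^K).  It follows from
  Vandermonde's identity, since only the outer binomials of 2^K are odd.\<close>
lemma binomial_add_2pow_mod2:
  fixes M :: nat
  assumes "M = 2 ^ K"
  shows "(of_nat ((s + M) choose t) :: bit) =
     of_nat (s choose t) + (if M \<le> t then of_nat (s choose (t - M)) else 0)"
proof -
  let ?term = "\<lambda>k. (of_nat (M choose k) :: bit) * of_nat (s choose (t - k))"
  have M0: "M \<noteq> 0" using assms by simp
  have "(s + M) choose t = (\<Sum>k\<le>t. (M choose k) * (s choose (t - k)))"
    using vandermonde[of M s t] by (simp add: add.commute)
  then have "(of_nat ((s + M) choose t) :: bit) = (\<Sum>k\<le>t. ?term k)"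
    by simp
  also have "\<dots> = (\<Sum>k\<in>{k. k \<le> t \<and> (k = 0 \<or> k = M)}. ?term k)"
  proof (rule sum.mono_neutral_right)
    show "\<forall>k\<in>{..t} - {k. k \<le> t \<and> (k = 0 \<or> k = M)}. ?term k = 0"
    proof
      fix k assume k: "k \<in> {..t} - {k. k \<le> t \<and> (k = 0 \<or> k = M)}"
      show "?term k = 0"
      proof (cases "k < M")
        case True
        then have "even (M choose k)" using even_binomial_2pow[of k K] k assms by auto
        then show ?thesis by (simp add: of_nat_bit)
      next
        case False
        then have "M < k" using k by auto
        then show ?thesis by (simp add: binomial_eq_0)
      qed
    qed
  qed auto
  also have "\<dots> = of_nat (s choose t) + (if M \<le> t then of_nat (s choose (t - M)) else 0)"
  proof (cases "M \<le> t")
    case True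
    then have "{k. k \<le> t \<and> (k = 0 \<or> k = M)} = {0, M}" by auto
    then show ?thesis using True M0 by simp
  next
    case False
    then have "{k. k \<le> t \<and> (k = 0 \<or> k = M)} = {0}" by auto
    then show ?thesis using False by simp
  qed
  finally show ?thesis .
qed

lemma sum_atMost_shifted:
  fixes s M :: nat
  shows "(\<Sum>t\<le>s + M. (if M \<le> t then h (t - M) else (0::'a::comm_monoid_add))) = (\<Sum>i\<le>s. h i)"
proof (induction s)
  case 0
  have "(\<Sum>t\<le>M. (if M \<le> t then h (t - M) else 0))
      = (\<Sum>t<M. (if M \<le> t then h (t - M) else 0)) + h 0"
    by (simp add: lessThan_Suc_atMost[symmetric])
  then show ?case by simp
next
  case (Suc s)
  then show ?case by (simp add: add.commute)
qed

lemma bin_tr_shift_2pow: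
  fixes M :: nat
  assumes "M = 2 ^ K"
  shows "bin_tr c (s + M) = bin_tr c s + bin_tr (\<lambda>t. c (M + t)) s"
proof -
  have "bin_tr c (s + M) = (\<Sum>t\<le>s + M. of_nat (s choose t) * c t)
      + (\<Sum>t\<le>s + M. (if M \<le> t then of_nat (s choose (t - M)) else 0) * c t)"
    unfolding bin_tr_def binomial_add_2pow_mod2[OF assms]
    by (simp add: sum.distrib algebra_simps)
  also have "(\<Sum>t\<le>s + M. of_nat (s choose t) * c t) = bin_tr c s"
    by (rule bin_tr_extend[symmetric]) simp
  also have "(\<Sum>t\<le>s + M. (if M \<le> t then of_nat (s choose (t - M)) else 0) * c t)
      = (\<Sum>t\<le>s + M. (if M \<le> t then (\<lambda>i. of_nat (s choose i) * c (M + i)) (t - M) else 0))"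
    by (rule sum.cong) auto
  also have "\<dots> = bin_tr (\<lambda>t. c (M + t)) s"
    unfolding bin_tr_def by (rule sum_atMost_shifted)
  finally show ?thesis .
qed

lemma bin_tr_periodic_if_low_support:
  fixes M :: nat
  assumes "M = 2 ^ K" "\<And>t. M \<le> t \<Longrightarrow> c t = 0"
  shows "bin_tr c (s + M) = bin_tr c s"
  using bin_tr_shift_2pow[OF assms(1), of c s] assms(2) by simp

lemma bin_tr_vanishes_if_periodic:
  fixes M :: nat
  assumes "M = 2 ^ K" "\<And>s. w (s + M) = w s" "M \<le> t"
  shows "bin_tr w t = 0"
proof -
  define a where "a = bin_tr w"
  have "bin_tr (\<lambda>i. a (M + i)) s = 0" for s
    using assms(2)[of s] bin_tr_shift_2pow[OF assms(1), of a s]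
    by (simp add: a_def bin_tr_involution)
  then have "bin_tr (\<lambda>i. a (M + i)) = (\<lambda>_. 0)" by auto
  then have "a (M + i) = 0" for i
    using bin_tr_involution[of "\<lambda>i. a (M + i)" i] by simp
  then show ?thesis
    using assms(3) unfolding a_def by (metis le_add_diff_inverse)
qed

section \<open>The multiplier on the level of weight sequences\<close>

text \<open>Let a be the ANF weight sequence of a symmetric function of degree
  d < 2 M, M = 2^K, and c the sequence of g = 1 + sum_t a(M+t) sigma_t.  Then the
  product of the value vectors B c and B a is M-periodic, hence its ANF weight
  sequence vanishes from M on.\<close>
lemma multiplier_kills_high_weights:
  fixes M :: nat
  assumes M: "M = 2 ^ K"
    and a_support: "\<And>t. d < t \<Longrightarrow> a t = 0"
    and d_less: "d < 2 * M"
    and c_def: "c = (\<lambda>t. a (M + t) + (if t = 0 then 1 else 0))"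
    and "M \<le> t"
  shows "bin_tr (\<lambda>s. bin_tr c s * bin_tr a s) t = 0"
proof (rule bin_tr_vanishes_if_periodic[OF M _ \<open>M \<le> t\<close>])
  fix s
  define tail where "tail = bin_tr (\<lambda>t. a (M + t)) s"
  have u: "bin_tr c s = tail + 1"
    unfolding c_def tail_def bin_tr_add bin_tr_unit ..
  have u_periodic: "bin_tr c (s + M) = bin_tr c s"
    by (rule bin_tr_periodic_if_low_support[OF M]) (use a_support d_less in \<open>auto simp: c_def\<close>)
  have v_shift: "bin_tr a (s + M) = bin_tr a s + tail"
    unfolding tail_def by (rule bin_tr_shift_2pow[OF M])
  show "bin_tr c (s + M) * bin_tr a (s + M) = bin_tr c s * bin_tr a s"
    unfolding u_periodic v_shift u by (cases tail; cases "bin_tr a s") simp_all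
qed

section \<open>Symmetric Boolean functions and their degree\<close>

definition sym_fun :: "(nat \<Rightarrow> bit) \<Rightarrow> nat set \<Rightarrow> bool" where
  "sym_fun v S \<longleftrightarrow> v (card S) = 1"

lemma bf_mult_sym_fun: "bf_mult (sym_fun u) (sym_fun v) = sym_fun (\<lambda>j. u j * v j)"
  unfolding bf_mult_def sym_fun_def
  by (rule ext) (metis bit_not_one_iff mult_eq_0_iff mult_1)

lemma card_subsets_size_pred:
  assumes "finite T"
  shows "card {S. S \<subseteq> T \<and> P (card S)} = (\<Sum>j\<le>card T. if P j then card T choose j else 0)"
proof -
  let ?A = "{S. S \<subseteq> T \<and> P (card S)}"
  have fin: "finite ?A" by (rule finite_subset[of _ "Pow T"]) (use assms in auto)
  have sizes: "card ` ?A \<subseteq> {..card T}" using assms by (auto intro: card_mono)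
  have "card ?A = (\<Sum>S\<in>?A. 1::nat)" by simp
  also have "\<dots> = (\<Sum>j\<le>card T. \<Sum>S\<in>{S. S \<in> ?A \<and> card S = j}. 1)"
    by (rule sum.group[OF fin _ sizes, symmetric]) simp
  also have "\<dots> = (\<Sum>j\<le>card T. if P j then card T choose j else 0)"
  proof (rule sum.cong[OF refl])
    fix j
    have "{S. S \<in> ?A \<and> card S = j} = (if P j then {S. S \<subseteq> T \<and> card S = j} else {})"
      by auto
    then show "(\<Sum>S\<in>{S. S \<in> ?A \<and> card S = j}. 1::nat) = (if P j then card T choose j else 0)"
      using n_subsets[OF assms, of j] by simp
  qed
  finally show ?thesis .
qed

lemma anf_coeff_sym_fun:
  assumes "finite T"
  shows "anf_coeff (sym_fun v) T \<longleftrightarrow> bin_tr v (card T) = 1"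
proof -
  let ?sum = "\<Sum>j\<le>card T. if v j = 1 then card T choose j else 0"
  have "anf_coeff (sym_fun v) T \<longleftrightarrow> odd ?sum"
    unfolding anf_coeff_def sym_fun_def using card_subsets_size_pred[OF assms, of "\<lambda>k. v k = 1"] by simp
  also have "\<dots> \<longleftrightarrow> (of_nat ?sum :: bit) = 1"
    by (simp add: of_nat_bit)
  also have "(of_nat ?sum :: bit) = bin_tr v (card T)"
    unfolding bin_tr_def of_nat_sum by (rule sum.cong) (auto simp: bit_not_one_iff)
  finally show ?thesis .
qed

lemma anf_coeff_cong:
  assumes "\<And>S. S \<subseteq> T \<Longrightarrow> h S = h' S"
  shows "anf_coeff h T = anf_coeff h' T"
proof -
  have "{S. S \<subseteq> T \<and> h S} = {S. S \<subseteq> T \<and> h' S}" using assms by auto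
  then show ?thesis unfolding anf_coeff_def by simp
qed

lemma alg_deg_cong:
  assumes "\<And>S. S \<subseteq> {..<n} \<Longrightarrow> h S = h' S"
  shows "alg_deg n h = alg_deg n h'"
proof -
  have "anf_coeff h T = anf_coeff h' T" if "T \<subseteq> {..<n}" for T
    by (rule anf_coeff_cong) (use that assms in auto)
  then show ?thesis unfolding alg_deg_def by metis
qed

lemma alg_deg_finite: "finite ({card T |T. T \<subseteq> {..<n} \<and> anf_coeff h T} \<union> {0})"
proof -
  have "{card T |T. T \<subseteq> {..<n} \<and> anf_coeff h T} \<subseteq> {..n}"
    by (auto dest!: card_mono[OF finite_lessThan])
  then show ?thesis by (auto intro: finite_subset)
qed

lemma alg_deg_le:
  assumes "\<And>T. T \<subseteq> {..<n} \<Longrightarrow> anf_coeff h T \<Longrightarrow> card T \<le> D"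
  shows "alg_deg n h \<le> D"
  unfolding alg_deg_def using alg_deg_finite[of n h] assms by (subst Max_le_iff) auto

lemma alg_deg_ge:
  assumes "T \<subseteq> {..<n}" "anf_coeff h T"
  shows "card T \<le> alg_deg n h"
  unfolding alg_deg_def using alg_deg_finite[of n h] assms by (intro Max_ge) auto

lemma alg_deg_le_n: "alg_deg n h \<le> n"
  by (rule alg_deg_le) (auto dest: card_mono[OF finite_lessThan])

lemma alg_deg_attained:
  assumes "0 < alg_deg n h"
  obtains T where "T \<subseteq> {..<n}" "card T = alg_deg n h" "anf_coeff h T"
proof -
  have "alg_deg n h \<in> {card T |T. T \<subseteq> {..<n} \<and> anf_coeff h T} \<union> {0}"
    unfolding alg_deg_def using alg_deg_finite[of n h] by (intro Max_in) auto
  then show ?thesis using assms that by auto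
qed

lemma alg_deg_sym_fun_le:
  assumes "\<And>t. r < t \<Longrightarrow> bin_tr v t = 0"
  shows "alg_deg n (sym_fun v) \<le> r"
proof (rule alg_deg_le)
  fix T assume "T \<subseteq> {..<n}" "anf_coeff (sym_fun v) T"
  then have "bin_tr v (card T) = 1"
    using anf_coeff_sym_fun[of T v] finite_subset by blast
  then show "card T \<le> r" using assms[of "card T"] by (cases "r < card T") auto
qed

lemma alg_deg_sym_fun_ge:
  assumes "bin_tr v r = 1" "r \<le> n"
  shows "r \<le> alg_deg n (sym_fun v)"
  using alg_deg_ge[of "{..<r}" n "sym_fun v"] assms anf_coeff_sym_fun[of "{..<r}" v] by simp

text \<open>Every symmetric function of degree d is, on Pow {..<n}, the symmetric
  function of some weight sequence a of ANF coefficients with a(d) = 1 and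
  a(t) = 0 beyond d.  (Beyond n the ANF weights of f are unconstrained, so a is
  truncated at d.)\<close>
lemma symmetric_bf_anf_weights:
  assumes "symmetric_bf n f" "0 < alg_deg n f"
  obtains a where "\<And>t. alg_deg n f < t \<Longrightarrow> a t = 0" "a (alg_deg n f) = 1"
    "\<And>S. S \<subseteq> {..<n} \<Longrightarrow> f S = sym_fun (bin_tr a) S"
proof -
  define d where "d = alg_deg n f"
  define v where "v j = (of_bool (f {..<j}) :: bit)" for j
  have f_sym: "f S = sym_fun v S" if "S \<subseteq> {..<n}" for S
  proof -
    have "card S \<le> n" using card_mono[OF finite_lessThan that] by simp
    then have "f S = f {..<card S}"
      using assms(1) that unfolding symmetric_bf_def by (metis card_lessThan lessThan_subset_iff)
    then show ?thesis by (simp add: sym_fun_def v_def)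
  qed
  have anf_f: "anf_coeff f T \<longleftrightarrow> bin_tr v (card T) = 1" if "T \<subseteq> {..<n}" for T
    using anf_coeff_cong[of T f "sym_fun v"] f_sym that anf_coeff_sym_fun[of T v]
    by (meson finite_subset finite_lessThan subset_trans)
  define a where "a t = (if t \<le> d then bin_tr v t else 0)" for t
  have "a d = 1"
  proof -
    obtain T where "T \<subseteq> {..<n}" "card T = d" "anf_coeff f T"
      using alg_deg_attained[OF assms(2)] d_def by metis
    then show ?thesis using anf_f by (simp add: a_def)
  qed
  moreover have "f S = sym_fun (bin_tr a) S" if S: "S \<subseteq> {..<n}" for S
  proof -
    have "a j = bin_tr v j" if "j \<le> n" for j
    proof (cases "j \<le> d")
      case False
      have "\<not> anf_coeff f {..<j}"
        using alg_deg_ge[of "{..<j}" n f] False d_def \<open>j \<le> n\<close> by auto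
      then show ?thesis using anf_f[of "{..<j}"] \<open>j \<le> n\<close> False by (simp add: a_def bit_not_one_iff)
    qed (simp add: a_def)
    moreover have "card S \<le> n" using card_mono[OF finite_lessThan S] by simp
    ultimately have "bin_tr a (card S) = bin_tr (bin_tr v) (card S)"
      by (intro bin_tr_cong) simp
    then show ?thesis using f_sym[OF S] by (simp add: sym_fun_def bin_tr_involution)
  qed
  moreover have "a t = 0" if "d < t" for t using that by (simp add: a_def)
  ultimately show ?thesis using that d_def by blast
qed

section \<open>Fast algebraic immunity\<close>

text \<open>A multiplier g with 1 <= deg g, 2 deg g <= D and deg g + deg (g f) <= D
  bounds the fast algebraic immunity by D, whether or not deg g < AI(f).\<close>
lemma fast_alg_immunity_le:
  assumes "1 \<le> alg_deg n g" "2 * alg_deg n g \<le> D"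
    and "alg_deg n g + alg_deg n (bf_mult g f) \<le> D"
  shows "fast_alg_immunity n f \<le> D"
proof (cases "alg_deg n g < alg_immunity n f")
  case True
  have "fast_alg_immunity n f \<le> alg_deg n g + alg_deg n (bf_mult g f)"
    unfolding fast_alg_immunity_def by (rule Least_le) (use True assms(1) in blast)
  then show ?thesis using assms(3) by simp
next
  case False
  have "fast_alg_immunity n f \<le> 2 * alg_immunity n f"
    unfolding fast_alg_immunity_def by (rule Least_le) simp
  then show ?thesis using False assms(2) by simp
qed

text \<open>The key construction: if 2^K < deg f < 2^(K+1), the symmetric multiplier
  g with weights c(t) = a(2^K + t) + [t = 0] has degree deg f - 2^K, while
  g f has degree below 2^K.\<close>
lemma symmetric_low_degree_multiplier:
  fixes M :: nat
  assumes "symmetric_bf n f" "M = 2 ^ K" "M < alg_deg n f" "alg_deg n f < 2 * M"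
  obtains g where "alg_deg n g = alg_deg n f - M" "alg_deg n (bf_mult g f) < M"
proof -
  define d where "d = alg_deg n f"
  obtain a where a_high: "\<And>t. d < t \<Longrightarrow> a t = 0" and a_d: "a d = 1"
    and f_eq: "\<And>S. S \<subseteq> {..<n} \<Longrightarrow> f S = sym_fun (bin_tr a) S"
    using symmetric_bf_anf_weights[OF assms(1)] assms(3) d_def by (metis gr_zeroI not_less0)
  define c where "c t = a (M + t) + (if t = 0 then 1 else 0)" for t
  define g where "g = sym_fun (bin_tr c)"
  have deg_g: "alg_deg n g = d - M"
  proof (rule antisym)
    show "alg_deg n g \<le> d - M"
      unfolding g_def
      by (rule alg_deg_sym_fun_le) (use a_high in \<open>auto simp: bin_tr_involution c_def\<close>)
    have "bin_tr (bin_tr c) (d - M) = 1"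
      using a_d assms(3) d_def by (simp add: bin_tr_involution c_def)
    then show "d - M \<le> alg_deg n g"
      unfolding g_def by (rule alg_deg_sym_fun_ge) (use alg_deg_le_n[of n f] d_def in simp)
  qed
  have "alg_deg n (bf_mult g f) = alg_deg n (sym_fun (\<lambda>s. bin_tr c s * bin_tr a s))"
    by (rule alg_deg_cong) (simp add: g_def f_eq bf_mult_sym_fun[symmetric] bf_mult_def)
  also have "\<dots> \<le> M - 1"
  proof (rule alg_deg_sym_fun_le)
    fix t assume "M - 1 < t"
    then show "bin_tr (\<lambda>s. bin_tr c s * bin_tr a s) t = 0"
      by (intro multiplier_kills_high_weights[OF assms(2) a_high])
        (use assms(4) d_def in \<open>auto simp: c_def fun_eq_iff\<close>)
  qed
  finally have "alg_deg n (bf_mult g f) \<le> M - 1" .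
  moreover have "0 < M" using assms(2) by simp
  ultimately have "alg_deg n (bf_mult g f) < M" by linarith
  then show ?thesis using that deg_g d_def by blast
qed

theorem corollary6:
  fixes n :: nat and f :: "nat set \<Rightarrow> bool"
  assumes "symmetric_bf n f"
    and "alg_deg n f > 1"
    and "\<not> (\<exists>k::nat. alg_deg n f = 2 ^ k)"
  shows "fast_alg_immunity n f \<le> alg_deg n f - 1"
proof -
  define d where "d = alg_deg n f"
  obtain K where K: "2 ^ K \<le> d" "d < 2 ^ (K + 1)"
    using ex_power_ivl1[of 2 d] assms(2) d_def by auto
  define M :: nat where "M = 2 ^ K"
  have "M \<noteq> d" using assms(3) d_def M_def by metis
  then have "M < d" "d < 2 * M" using K M_def by auto
  then obtain g where deg_g: "alg_deg n g = d - M" and deg_gf: "alg_deg n (bf_mult g f) < M"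
    using symmetric_low_degree_multiplier[OF assms(1) M_def] d_def by metis
  show ?thesis
    by (rule fast_alg_immunity_le[of n g])
      (use deg_g deg_gf \<open>M < d\<close> \<open>d < 2 * M\<close> d_def in auto)
qed

end
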